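(* Let $C>0$, $\mathbf{w}^t\in\mathbb{R}^d$, let $\theta_1^t\le\dots\le\theta_{K-1}^t$ be real thresholds, $\mathbf{x}^t\in\mathbb{R}^d$ and integers $1\le y_l^t\le y_r^t\le K$; let $I_t=\{1,\dots,y_l^t-1\}\cup\{y_r^t,\dots,K-1\}$. Let $(\mathbf{w}^{t+1},\boldsymbol\theta^{t+1})$ be the PA-II update, i.e. the $(\mathbf{w},\boldsymbol\theta)$-part of the minimizer over $\mathbf{w}\in\mathbb{R}^d$, $\boldsymbol\theta\in\mathbb{R}^{K-1}$, $(\xi_i)_{i\in I_t}\in\mathbb{R}^{I_t}$ of $$\tfrac12\Vert\mathbf{w}-\mathbf{w}^t\Vert^2+\tfrac12\Vert\boldsymbol\theta-\boldsymbol\theta^t\Vert^2+C\sum_{i\in I_t}\xi_i^2$$ subject to $\mathbf{w}\cdot\mathbf{x}^t-\theta_i\ge 1-\xi_i$ for $i=1,\dots,y_l^t-1$ and $\mathbf{w}\cdot\mathbf{x}^t-\theta_i\le -1+\xi_i$ for $i=y_r^t,\dots,K-1$. Then $\theta_1^{t+1}\le\theta_2^{t+1}\le\dots\le\theta_{K-1}^{t+1}$.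
   Context: Online ranking into $K$ ordered classes with interval labels $[y_l^t,y_r^t]$: a ranker is $(\mathbf{w},\boldsymbol\theta)$, $\boldsymbol\theta=(\theta_1,\dots,\theta_{K-1})$, predicting $\min\{i:\mathbf{w}\cdot\mathbf{x}-\theta_i<0\}$ with $\theta_K=\infty$. PA-II is the passive-aggressive variant with squared slack penalty and parameter $C$ that at each trial computes the exact solution of the stated convex program. *)

theory Defs
  imports "HOL-Analysis.Analysis"
begin

text \<open>Thresholds and slacks are functions on nat; only indices 1..K-1 (resp. the
index set I_t) matter.\<close>

definition pa_index_set :: "nat \<Rightarrow> nat \<Rightarrow> nat \<Rightarrow> nat set" where
  "pa_index_set yl yr K = {1..<yl} \<union> {yr..<K}"

definition pa2_feasible ::
  "nat \<Rightarrow> nat \<Rightarrow> nat \<Rightarrow> real^'d \<Rightarrow> real^'d \<Rightarrow> (nat \<Rightarrow> real) \<Rightarrow> (nat \<Rightarrow> real) \<Rightarrow> bool" where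
  "pa2_feasible yl yr K x w \<theta> \<xi> \<longleftrightarrow>
     (\<forall>i\<in>{1..<yl}. w \<bullet> x - \<theta> i \<ge> 1 - \<xi> i) \<and>
     (\<forall>i\<in>{yr..<K}. w \<bullet> x - \<theta> i \<le> -1 + \<xi> i)"

definition pa2_objective ::
  "real \<Rightarrow> nat \<Rightarrow> nat \<Rightarrow> nat \<Rightarrow> real^'d \<Rightarrow> (nat \<Rightarrow> real)
   \<Rightarrow> real^'d \<Rightarrow> (nat \<Rightarrow> real) \<Rightarrow> (nat \<Rightarrow> real) \<Rightarrow> real" where
  "pa2_objective C yl yr K wt \<theta>t w \<theta> \<xi> =
     (1/2) * (norm (w - wt))^2 + (1/2) * (\<Sum>i\<in>{1..<K}. (\<theta> i - \<theta>t i)^2)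
     + C * (\<Sum>i\<in>pa_index_set yl yr K. (\<xi> i)^2)"

definition pa2_minimizer ::
  "real \<Rightarrow> nat \<Rightarrow> nat \<Rightarrow> nat \<Rightarrow> real^'d \<Rightarrow> real^'d \<Rightarrow> (nat \<Rightarrow> real)
   \<Rightarrow> real^'d \<Rightarrow> (nat \<Rightarrow> real) \<Rightarrow> (nat \<Rightarrow> real) \<Rightarrow> bool" where
  "pa2_minimizer C yl yr K x wt \<theta>t w \<theta> \<xi> \<longleftrightarrow>
     pa2_feasible yl yr K x w \<theta> \<xi> \<and>
     (\<forall>w' \<theta>' \<xi>'. pa2_feasible yl yr K x w' \<theta>' \<xi>' \<longrightarrow>
        pa2_objective C yl yr K wt \<theta>t w \<theta> \<xi> \<le> pa2_objective C yl yr K wt \<theta>t w' \<theta>' \<xi>')"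

end

theory Submission
  imports Defs
begin

text \<open>If the PA-II solution had \<open>\<theta> i > \<theta> j\<close> for some \<open>i < j\<close>, replace both thresholds by
their mean (and, when \<open>i\<close> and \<open>j\<close> carry the same kind of constraint, also both slacks).
Constraints on the same side are linear, so they survive averaging; for constraints on
opposite sides, lowering \<open>\<theta> i\<close> and raising \<open>\<theta> j\<close> only helps. The slack penalty does not
grow, and since the old thresholds are ordered, the threshold term strictly decreases by
at least \<open>(\<theta> i - \<theta> j)\<^sup>2 / 2\<close>, contradicting minimality.\<close>

definition average_pair :: "'a \<Rightarrow> 'a \<Rightarrow> ('a \<Rightarrow> real) \<Rightarrow> 'a \<Rightarrow> real" where
  "average_pair i j f = f(i := (f i + f j) / 2, j := (f i + f j) / 2)"

lemma average_pair_simps [simp]: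
  "average_pair i j f i = (f i + f j) / 2"
  "average_pair i j f j = (f i + f j) / 2"
  "k \<noteq> i \<Longrightarrow> k \<noteq> j \<Longrightarrow> average_pair i j f k = f k"
  by (simp_all add: average_pair_def)

lemma average_pair_at_pair:
  "k = i \<or> k = j \<Longrightarrow> average_pair i j f k = (f i + f j) / 2"
  by auto

lemma sum_diff_eq_off_pair:
  fixes f g :: "'a \<Rightarrow> 'b::ab_group_add"
  assumes "finite A" "i \<in> A" "j \<in> A" "i \<noteq> j"
    and "\<And>k. k \<in> A \<Longrightarrow> k \<noteq> i \<Longrightarrow> k \<noteq> j \<Longrightarrow> f k = g k"
  shows "sum f A - sum g A = (f i - g i) + (f j - g j)"
proof -
  have "sum f A - sum g A = (\<Sum>k\<in>A. f k - g k)"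
    by (simp add: sum_subtractf)
  also have "\<dots> = (\<Sum>k\<in>{i, j}. f k - g k)"
    using assms by (intro sum.mono_neutral_right) auto
  finally show ?thesis
    using \<open>i \<noteq> j\<close> by simp
qed

lemma sum_sq_dist_average_pair:
  fixes f t :: "'a \<Rightarrow> real"
  assumes "finite A" "i \<in> A" "j \<in> A" "i \<noteq> j"
  shows "(\<Sum>k\<in>A. (f k - t k)\<^sup>2) - (\<Sum>k\<in>A. (average_pair i j f k - t k)\<^sup>2)
           = (f i - f j) * (t j - t i) + (f i - f j)\<^sup>2 / 2"
  using sum_diff_eq_off_pair[OF assms, of "\<lambda>k. (f k - t k)\<^sup>2" "\<lambda>k. (average_pair i j f k - t k)\<^sup>2"]
    \<open>i \<noteq> j\<close>
  by (simp add: power2_eq_square field_simps)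

lemma sum_sq_dist_average_pair_less:
  fixes f t :: "'a \<Rightarrow> real"
  assumes "finite A" "i \<in> A" "j \<in> A" "t i \<le> t j" "f j < f i"
  shows "(\<Sum>k\<in>A. (average_pair i j f k - t k)\<^sup>2) < (\<Sum>k\<in>A. (f k - t k)\<^sup>2)"
proof -
  have "i \<noteq> j"
    using assms(5) by auto
  moreover have "0 \<le> (f i - f j) * (t j - t i)" "0 < (f i - f j)\<^sup>2 / 2"
    using assms(4,5) by simp_all
  ultimately show ?thesis
    using sum_sq_dist_average_pair[OF assms(1-3), of f t] by linarith
qed

lemma sum_sq_average_pair_le:
  fixes f :: "'a \<Rightarrow> real"
  assumes "finite A" "i \<in> A \<longleftrightarrow> j \<in> A" "i \<noteq> j"
  shows "(\<Sum>k\<in>A. (average_pair i j f k)\<^sup>2) \<le> (\<Sum>k\<in>A. (f k)\<^sup>2)"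
proof (cases "i \<in> A")
  case True
  then have "j \<in> A"
    using assms(2) by simp
  from sum_sq_dist_average_pair[OF assms(1) True this assms(3), of f "\<lambda>_. 0"]
  have "(\<Sum>k\<in>A. (f k)\<^sup>2) - (\<Sum>k\<in>A. (average_pair i j f k)\<^sup>2) = (f i - f j)\<^sup>2 / 2"
    by simp
  moreover have "0 \<le> (f i - f j)\<^sup>2 / 2"
    by simp
  ultimately show ?thesis
    by linarith
next
  case False
  then have "(\<Sum>k\<in>A. (average_pair i j f k)\<^sup>2) = (\<Sum>k\<in>A. (f k)\<^sup>2)"
    using assms by (intro sum.cong) (auto simp: average_pair_def)
  then show ?thesis
    by simp
qed

lemma pa2_feasible_average_pair_same_side:
  assumes feas: "pa2_feasible yl yr K x w \<theta> \<xi>"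
    and lower: "i \<in> {1..<yl} \<longleftrightarrow> j \<in> {1..<yl}"
    and upper: "i \<in> {yr..<K} \<longleftrightarrow> j \<in> {yr..<K}"
  shows "pa2_feasible yl yr K x w (average_pair i j \<theta>) (average_pair i j \<xi>)"
  unfolding pa2_feasible_def
proof (intro conjI ballI)
  fix k
  assume k: "k \<in> {1..<yl}"
  show "w \<bullet> x - average_pair i j \<theta> k \<ge> 1 - average_pair i j \<xi> k"
  proof (cases "k = i \<or> k = j")
    case True
    then have "i \<in> {1..<yl}" "j \<in> {1..<yl}"
      using k lower by auto
    then have "w \<bullet> x - \<theta> i \<ge> 1 - \<xi> i" "w \<bullet> x - \<theta> j \<ge> 1 - \<xi> j"
      using feas by (auto simp: pa2_feasible_def)
    then show ?thesis
      using True by (simp add: average_pair_at_pair field_simps)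
  next
    case False
    then show ?thesis
      using feas k by (simp add: pa2_feasible_def)
  qed
next
  fix k
  assume k: "k \<in> {yr..<K}"
  show "w \<bullet> x - average_pair i j \<theta> k \<le> -1 + average_pair i j \<xi> k"
  proof (cases "k = i \<or> k = j")
    case True
    then have "i \<in> {yr..<K}" "j \<in> {yr..<K}"
      using k upper by auto
    then have "w \<bullet> x - \<theta> i \<le> -1 + \<xi> i" "w \<bullet> x - \<theta> j \<le> -1 + \<xi> j"
      using feas by (auto simp: pa2_feasible_def)
    then show ?thesis
      using True by (simp add: average_pair_at_pair field_simps)
  next
    case False
    then show ?thesis
      using feas k by (simp add: pa2_feasible_def)
  qed
qed

lemma pa2_feasible_average_pair_opposite_sides:
  assumes feas: "pa2_feasible yl yr K x w \<theta> \<xi>" and inverted: "\<theta> j < \<theta> i"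
    and "i \<notin> {yr..<K}" and "j \<notin> {1..<yl}"
  shows "pa2_feasible yl yr K x w (average_pair i j \<theta>) \<xi>"
  unfolding pa2_feasible_def
proof (intro conjI ballI)
  fix k
  assume k: "k \<in> {1..<yl}"
  then have "k \<noteq> j"
    using assms(4) by auto
  then have "average_pair i j \<theta> k \<le> \<theta> k"
    using inverted by (cases "k = i") simp_all
  moreover have "w \<bullet> x - \<theta> k \<ge> 1 - \<xi> k"
    using feas k by (simp add: pa2_feasible_def)
  ultimately show "w \<bullet> x - average_pair i j \<theta> k \<ge> 1 - \<xi> k"
    by linarith
next
  fix k
  assume k: "k \<in> {yr..<K}"
  then have "k \<noteq> i"
    using assms(3) by auto
  then have "\<theta> k \<le> average_pair i j \<theta> k"
    using inverted by (cases "k = j") simp_all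
  moreover have "w \<bullet> x - \<theta> k \<le> -1 + \<xi> k"
    using feas k by (simp add: pa2_feasible_def)
  ultimately show "w \<bullet> x - average_pair i j \<theta> k \<le> -1 + \<xi> k"
    by linarith
qed

lemma pa2_feasible_average_inverted_pair:
  assumes feas: "pa2_feasible yl yr K x w \<theta> \<xi>"
    and "yl \<le> yr" "1 \<le> i" "i < j" "j < K" and inverted: "\<theta> j < \<theta> i"
  obtains \<xi>' where "pa2_feasible yl yr K x w (average_pair i j \<theta>) \<xi>'"
    and "(\<Sum>k\<in>pa_index_set yl yr K. (\<xi>' k)\<^sup>2) \<le> (\<Sum>k\<in>pa_index_set yl yr K. (\<xi> k)\<^sup>2)"
proof (cases "i \<in> {yr..<K} \<or> j \<in> {1..<yl}")
  case True
  then have lower: "i \<in> {1..<yl} \<longleftrightarrow> j \<in> {1..<yl}"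
    and upper: "i \<in> {yr..<K} \<longleftrightarrow> j \<in> {yr..<K}"
    using assms(2-5) by auto
  then have "i \<in> pa_index_set yl yr K \<longleftrightarrow> j \<in> pa_index_set yl yr K"
    by (auto simp: pa_index_set_def)
  then show ?thesis
    using that pa2_feasible_average_pair_same_side[OF feas lower upper]
      sum_sq_average_pair_le[of "pa_index_set yl yr K" i j \<xi>] \<open>i < j\<close>
    by (simp add: pa_index_set_def)
next
  case False
  then show ?thesis
    using that pa2_feasible_average_pair_opposite_sides[OF feas inverted] by blast
qed

theorem theorem3:
  fixes C :: real and K yl yr :: nat
    and x wt w :: "real^'d" and \<theta>t \<theta> \<xi> :: "nat \<Rightarrow> real"
  assumes "C > 0"
    and "\<And>i j. 1 \<le> i \<Longrightarrow> i \<le> j \<Longrightarrow> j < K \<Longrightarrow> \<theta>t i \<le> \<theta>t j"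
    and "1 \<le> yl" and "yl \<le> yr" and "yr \<le> K"
    and "pa2_minimizer C yl yr K x wt \<theta>t w \<theta> \<xi>"
  shows "\<forall>i j. 1 \<le> i \<longrightarrow> i \<le> j \<longrightarrow> j < K \<longrightarrow> \<theta> i \<le> \<theta> j"
proof (rule ccontr)
  assume "\<not> ?thesis"
  then obtain i j where ij: "1 \<le> i" "i \<le> j" "j < K" and inverted: "\<theta> j < \<theta> i"
    by (auto simp: not_le)
  then have "i < j"
    using order_le_less by auto
  have feas: "pa2_feasible yl yr K x w \<theta> \<xi>"
    using assms(6) by (simp add: pa2_minimizer_def)
  obtain \<xi>' where feas': "pa2_feasible yl yr K x w (average_pair i j \<theta>) \<xi>'"
    and slacks: "(\<Sum>k\<in>pa_index_set yl yr K. (\<xi>' k)\<^sup>2) \<le> (\<Sum>k\<in>pa_index_set yl yr K. (\<xi> k)\<^sup>2)"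
    using pa2_feasible_average_inverted_pair[OF feas assms(4) ij(1) \<open>i < j\<close> ij(3) inverted] .
  have "(\<Sum>k\<in>{1..<K}. (average_pair i j \<theta> k - \<theta>t k)\<^sup>2) < (\<Sum>k\<in>{1..<K}. (\<theta> k - \<theta>t k)\<^sup>2)"
    using ij assms(2)[OF ij] inverted by (intro sum_sq_dist_average_pair_less) auto
  moreover have "C * (\<Sum>k\<in>pa_index_set yl yr K. (\<xi>' k)\<^sup>2) \<le> C * (\<Sum>k\<in>pa_index_set yl yr K. (\<xi> k)\<^sup>2)"
    using slacks assms(1) by simp
  ultimately have "pa2_objective C yl yr K wt \<theta>t w (average_pair i j \<theta>) \<xi>'
                     < pa2_objective C yl yr K wt \<theta>t w \<theta> \<xi>"
    unfolding pa2_objective_def by linarith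
  with feas' assms(6) show False
    unfolding pa2_minimizer_def by (meson not_le)
qed

end
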